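(* Let $p,q$ be odd primes with $q-p=2$, let $\varepsilon\in\{1,-1\}$, let $D=D_1\cdots D_n$ ($n\ge 0$) be a product of distinct odd primes with $\gcd(pq,D)=1$, and let $E_D/\mathbb{Q}$ be the elliptic curve $y^2=x(x+\varepsilon pD)(x+\varepsilon qD)$. Then: (1) $E_D$ has good supersingular reduction at $3$ if $3\nmid pqD$; (2) $E_D$ has good ordinary reduction at $5$ if $5\nmid pqD$; (3) $E_D$ has good ordinary reduction at $7$ if $7\nmid pqD$ and $p\equiv 1,4\pmod 7$; (4) $E_D$ has good supersingular reduction at $7$ if $7\nmid pqD$ and $p\equiv 2,3,6\pmod 7$. *)

theory Defs
  imports Complex_Main "HOL-Computational_Algebra.Primes"
begin

text \<open>Long Weierstrass equations over the rationals:
  y^2 + a1 x y + a3 y = x^3 + a2 x^2 + a4 x + a6.\<close>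

datatype wcurve = W (a1: rat) (a2: rat) (a3: rat) (a4: rat) (a6: rat)

definition wdisc :: "wcurve \<Rightarrow> rat" where
  "wdisc E = (let b2 = a1 E ^ 2 + 4 * a2 E;
                  b4 = 2 * a4 E + a1 E * a3 E;
                  b6 = a3 E ^ 2 + 4 * a6 E;
                  b8 = a1 E ^ 2 * a6 E + 4 * a2 E * a6 E - a1 E * a3 E * a4 E
                       + a2 E * a3 E ^ 2 - a4 E ^ 2
              in - (b2 ^ 2) * b8 - 8 * b4 ^ 3 - 27 * b6 ^ 2 + 9 * b2 * b4 * b6)"

text \<open>E' is obtained from E by an admissible change of variables
  x = u^2 x' + r, y = u^3 y' + s u^2 x' + t over the rationals (Silverman, Table 3.1).\<close>
definition wiso :: "wcurve \<Rightarrow> wcurve \<Rightarrow> bool" where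
  "wiso E E' \<longleftrightarrow> (\<exists>u r s t :: rat. u \<noteq> 0 \<and>
      u * a1 E' = a1 E + 2 * s \<and>
      u ^ 2 * a2 E' = a2 E - s * a1 E + 3 * r - s ^ 2 \<and>
      u ^ 3 * a3 E' = a3 E + r * a1 E + 2 * t \<and>
      u ^ 4 * a4 E' = a4 E - s * a3 E + 2 * r * a2 E - (t + r * s) * a1 E + 3 * r ^ 2 - 2 * s * t \<and>
      u ^ 6 * a6 E' = a6 E + r * a4 E + r ^ 2 * a2 E + r ^ 3 - t * a3 E - t ^ 2 - r * t * a1 E)"

definition integral_model :: "wcurve \<Rightarrow> bool" where
  "integral_model E \<longleftrightarrow> a1 E \<in> \<int> \<and> a2 E \<in> \<int> \<and> a3 E \<in> \<int> \<and> a4 E \<in> \<int> \<and> a6 E \<in> \<int>"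

definition good_model_at :: "nat \<Rightarrow> wcurve \<Rightarrow> bool" where
  "good_model_at l E \<longleftrightarrow> integral_model E \<and> \<not> (int l dvd \<lfloor>wdisc E\<rfloor>)"

definition affine_pts_mod :: "nat \<Rightarrow> wcurve \<Rightarrow> (int \<times> int) set" where
  "affine_pts_mod l E = {(x, y). 0 \<le> x \<and> x < int l \<and> 0 \<le> y \<and> y < int l \<and>
      int l dvd (y ^ 2 + \<lfloor>a1 E\<rfloor> * x * y + \<lfloor>a3 E\<rfloor> * y
                 - x ^ 3 - \<lfloor>a2 E\<rfloor> * x ^ 2 - \<lfloor>a4 E\<rfloor> * x - \<lfloor>a6 E\<rfloor>)}"

text \<open>Trace of Frobenius a_l = l + 1 - #E~(F_l) (the point at infinity included).\<close>
definition trace_frob :: "nat \<Rightarrow> wcurve \<Rightarrow> int" where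
  "trace_frob l E = int l + 1 - (int (card (affine_pts_mod l E)) + 1)"

definition good_supersingular_at :: "nat \<Rightarrow> wcurve \<Rightarrow> bool" where
  "good_supersingular_at l E \<longleftrightarrow> prime l \<and>
     (\<exists>E'. wiso E E' \<and> good_model_at l E' \<and> int l dvd trace_frob l E')"

definition good_ordinary_at :: "nat \<Rightarrow> wcurve \<Rightarrow> bool" where
  "good_ordinary_at l E \<longleftrightarrow> prime l \<and>
     (\<exists>E'. wiso E E' \<and> good_model_at l E' \<and> \<not> int l dvd trace_frob l E')"

text \<open>E_D : y^2 = x (x + eps p D) (x + eps q D).\<close>
definition E_D :: "int \<Rightarrow> nat \<Rightarrow> nat \<Rightarrow> nat \<Rightarrow> wcurve" where
  "E_D \<epsilon> p q D = W 0 (of_int (\<epsilon> * (int p + int q) * int D)) 0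
                     (of_int (\<epsilon>^2 * int p * int q * int D ^ 2)) 0"

end

theory Submission
  imports Defs "HOL-Number_Theory.Cong"
begin

text \<open>For \<open>q = p + 2\<close> and \<open>\<epsilon>\<^sup>2 = 1\<close> the curve is \<open>y\<^sup>2 = x\<^sup>3 + A x\<^sup>2 + B x\<close> with
  \<open>A = \<epsilon>(2p + 2)D\<close>, \<open>B = p(p + 2)D\<^sup>2\<close>, and discriminant \<open>64 p\<^sup>2q\<^sup>2D\<^sup>6\<close>; so for an odd
  prime \<open>l \<nmid> pqD\<close> the model itself has good reduction at \<open>l\<close>. Counting points mod \<open>l\<close>, its
  trace of Frobenius depends only on \<open>\<epsilon>\<close>, \<open>p mod l\<close> and \<open>D mod l\<close>, and \<open>l \<nmid> p(p + 2)D\<close>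
  leaves finitely many residue classes; for \<open>l = 3, 5, 7\<close> the trace is computed in each.\<close>

definition short_trace :: "nat \<Rightarrow> int \<Rightarrow> int \<Rightarrow> int" where
  "short_trace l a b = int l - int (card (Set.filter
      (\<lambda>(x, y). int l dvd y ^ 2 - x ^ 3 - a * x ^ 2 - b * x) ({0..<int l} \<times> {0..<int l})))"

definition twin_trace :: "nat \<Rightarrow> int \<Rightarrow> nat \<Rightarrow> nat \<Rightarrow> int" where
  "twin_trace l \<epsilon> r d = short_trace l (\<epsilon> * (2 * int r + 2) * int d) (int r * (int r + 2) * int d ^ 2)"

lemma wiso_refl: "wiso E E"
  unfolding wiso_def by (rule exI[of _ 1]) simp

lemma wdisc_short: "wdisc (W 0 a 0 b 0) = 16 * b ^ 2 * (a ^ 2 - 4 * b)"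
  by (simp add: wdisc_def Let_def power2_eq_square power3_eq_cube algebra_simps)

lemma trace_frob_short: "trace_frob l (W 0 (of_int a) 0 (of_int b) 0) = short_trace l a b"
proof -
  have "affine_pts_mod l (W 0 (of_int a) 0 (of_int b) 0) = Set.filter
      (\<lambda>(x, y). int l dvd y ^ 2 - x ^ 3 - a * x ^ 2 - b * x) ({0..<int l} \<times> {0..<int l})"
    by (auto simp: affine_pts_mod_def)
  then show ?thesis
    by (simp add: trace_frob_def short_trace_def)
qed

lemma short_trace_cong:
  assumes "[a = a'] (mod int l)" and "[b = b'] (mod int l)"
  shows "short_trace l a b = short_trace l a' b'"
proof -
  have "[y ^ 2 - x ^ 3 - a * x ^ 2 - b * x = y ^ 2 - x ^ 3 - a' * x ^ 2 - b' * x] (mod int l)"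
    for x y :: int
    using assms by (intro cong_diff cong_mult cong_refl)
  then have "int l dvd y ^ 2 - x ^ 3 - a * x ^ 2 - b * x
      \<longleftrightarrow> int l dvd y ^ 2 - x ^ 3 - a' * x ^ 2 - b' * x" for x y :: int
    using cong_dvd_iff by blast
  then show ?thesis
    by (simp add: short_trace_def)
qed

lemma E_D_twin:
  assumes "\<epsilon> \<in> {1, -1}" and "q = p + 2"
  shows "E_D \<epsilon> p q D = W 0 (of_int (\<epsilon> * (2 * int p + 2) * int D)) 0
                          (of_int (int p * (int p + 2) * int D ^ 2)) 0"
  using assms by (auto simp: E_D_def algebra_simps)

lemma wdisc_E_D:
  assumes "\<epsilon> \<in> {1, -1}" and "q = p + 2"
  shows "wdisc (E_D \<epsilon> p q D) = of_int (64 * int p ^ 2 * int q ^ 2 * int D ^ 6)"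
proof -
  have eps: "\<epsilon> ^ 2 = 1" and q: "int q = int p + 2"
    using assms by auto
  have "wdisc (E_D \<epsilon> p q D) = of_int (16 * (int p * (int p + 2) * int D ^ 2) ^ 2
          * ((\<epsilon> * (2 * int p + 2) * int D) ^ 2 - 4 * (int p * (int p + 2) * int D ^ 2)))"
    unfolding E_D_twin[OF assms] wdisc_short by simp
  also have "\<dots> = of_int (64 * int p ^ 2 * int q ^ 2 * int D ^ 6)"
    using eps q by (intro arg_cong[where f = of_int]) algebra
  finally show ?thesis .
qed

lemma good_model_at_E_D:
  assumes "prime l" and "odd l" and "\<not> l dvd p * q * D"
    and "\<epsilon> \<in> {1, -1}" and "q = p + 2"
  shows "good_model_at l (E_D \<epsilon> p q D)"
proof -
  have "\<not> l dvd 2"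
    using assms(1,2) prime_ge_2_nat[of l] by (auto dest: dvd_imp_le)
  then have "\<not> l dvd 2 ^ 6"
    using assms(1) prime_dvd_power_iff[of l 6 2] by simp
  then have "\<not> l dvd 64 * p ^ 2 * q ^ 2 * D ^ 6"
    using assms(1,3) by (simp add: prime_dvd_mult_iff prime_dvd_power_iff)
  then have "\<not> int l dvd 64 * int p ^ 2 * int q ^ 2 * int D ^ 6"
    using int_dvd_int_iff[of l "64 * p ^ 2 * q ^ 2 * D ^ 6"] by simp
  then show ?thesis
    unfolding good_model_at_def integral_model_def wdisc_E_D[OF assms(4,5)] floor_of_int
    by (simp add: E_D_def)
qed

lemma trace_frob_E_D:
  assumes "\<epsilon> \<in> {1, -1}" and "q = p + 2"
  shows "trace_frob l (E_D \<epsilon> p q D) = twin_trace l \<epsilon> (p mod l) (D mod l)"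
proof -
  have "[int p = int (p mod l)] (mod int l)" and "[int D = int (D mod l)] (mod int l)"
    by (simp_all add: cong_def zmod_int)
  then show ?thesis
    unfolding E_D_twin[OF assms] trace_frob_short twin_trace_def
    by (intro short_trace_cong cong_mult cong_add cong_pow cong_refl)
qed

lemma good_supersingular_at_E_D:
  assumes "prime l" and "odd l" and "\<not> l dvd p * q * D"
    and "\<epsilon> \<in> {1, -1}" and "q = p + 2"
    and "int l dvd twin_trace l \<epsilon> (p mod l) (D mod l)"
  shows "good_supersingular_at l (E_D \<epsilon> p q D)"
  using assms good_model_at_E_D trace_frob_E_D wiso_refl
  unfolding good_supersingular_at_def by metis

lemma good_ordinary_at_E_D:
  assumes "prime l" and "odd l" and "\<not> l dvd p * q * D"
    and "\<epsilon> \<in> {1, -1}" and "q = p + 2"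
    and "\<not> int l dvd twin_trace l \<epsilon> (p mod l) (D mod l)"
  shows "good_ordinary_at l (E_D \<epsilon> p q D)"
  using assms good_model_at_E_D trace_frob_E_D wiso_refl
  unfolding good_ordinary_at_def by metis

lemma twin_residues:
  fixes l p q D :: nat
  assumes "0 < l" and "\<not> l dvd p * q * D" and "q = p + 2"
  shows "p mod l \<in> {1..<l} - {l - 2}" and "D mod l \<in> {1..<l}"
proof -
  have "\<not> l dvd p" and "\<not> l dvd p + 2" and "\<not> l dvd D"
    using assms(2) unfolding \<open>q = p + 2\<close> by (meson dvd_mult dvd_mult2)+
  moreover have "p mod l \<noteq> l - 2"
  proof
    assume "p mod l = l - 2"
    moreover have "p mod l \<noteq> 0"
      using \<open>\<not> l dvd p\<close> by (simp add: dvd_eq_mod_eq_0)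
    ultimately have "p mod l + 2 = l"
      by linarith
    then have "(p mod l + 2) mod l = 0"
      by simp
    then show False
      using \<open>\<not> l dvd p + 2\<close> by (metis mod_add_left_eq dvd_eq_mod_eq_0)
  qed
  ultimately show "p mod l \<in> {1..<l} - {l - 2}" and "D mod l \<in> {1..<l}"
    using assms(1) by (auto simp: dvd_eq_mod_eq_0)
qed

lemma twin_trace_3: "\<forall>\<epsilon>\<in>{1, -1}. \<forall>d\<in>{1..<3}. 3 dvd twin_trace 3 \<epsilon> 2 d"
  unfolding set_upt[symmetric] by code_simp

lemma twin_trace_5: "\<forall>\<epsilon>\<in>{1, -1}. \<forall>r\<in>{1..<5} - {3}. \<forall>d\<in>{1..<5}. \<not> 5 dvd twin_trace 5 \<epsilon> r d"
  unfolding set_upt[symmetric] by code_simp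

lemma twin_trace_7_ordinary: "\<forall>\<epsilon>\<in>{1, -1}. \<forall>r\<in>{1, 4}. \<forall>d\<in>{1..<7}. \<not> 7 dvd twin_trace 7 \<epsilon> r d"
  unfolding set_upt[symmetric] by code_simp

lemma twin_trace_7_supersingular:
  "\<forall>\<epsilon>\<in>{1, -1}. \<forall>r\<in>{2, 3, 6}. \<forall>d\<in>{1..<7}. 7 dvd twin_trace 7 \<epsilon> r d"
  unfolding set_upt[symmetric] by code_simp

theorem corollary2p2:
  fixes p q :: nat and \<epsilon> :: int and Ds :: "nat list" and D :: nat
  assumes "prime p" and "odd p" and "prime q" and "odd q" and "q = p + 2"
    and "\<epsilon> \<in> {1, -1}"
    and "distinct Ds" and "\<forall>d\<in>set Ds. prime d \<and> odd d"
    and "D = prod_list Ds"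
    and "gcd (p * q) D = 1"
  shows "(\<not> 3 dvd p * q * D \<longrightarrow> good_supersingular_at 3 (E_D \<epsilon> p q D))
       \<and> (\<not> 5 dvd p * q * D \<longrightarrow> good_ordinary_at 5 (E_D \<epsilon> p q D))
       \<and> (\<not> 7 dvd p * q * D \<and> (p mod 7 = 1 \<or> p mod 7 = 4)
            \<longrightarrow> good_ordinary_at 7 (E_D \<epsilon> p q D))
       \<and> (\<not> 7 dvd p * q * D \<and> (p mod 7 = 2 \<or> p mod 7 = 3 \<or> p mod 7 = 6)
            \<longrightarrow> good_supersingular_at 7 (E_D \<epsilon> p q D))"
proof (intro conjI impI)
  show "good_supersingular_at 3 (E_D \<epsilon> p q D)" if "\<not> 3 dvd p * q * D"
  proof -
    have "p mod 3 = 2"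
      using twin_residues(1)[of 3 p q D] that assms(5) by (auto simp del: mod_less_divisor)
    then show ?thesis
      using twin_residues(2)[of 3 p q D] twin_trace_3 that assms(5,6)
      by (intro good_supersingular_at_E_D) auto
  qed
  show "good_ordinary_at 5 (E_D \<epsilon> p q D)" if "\<not> 5 dvd p * q * D"
    using twin_residues[of 5 p q D] twin_trace_5 that assms(5,6)
    by (intro good_ordinary_at_E_D) auto
  show "good_ordinary_at 7 (E_D \<epsilon> p q D)"
    if "\<not> 7 dvd p * q * D \<and> (p mod 7 = 1 \<or> p mod 7 = 4)"
    using twin_residues[of 7 p q D] twin_trace_7_ordinary that assms(5,6)
    by (intro good_ordinary_at_E_D) auto
  show "good_supersingular_at 7 (E_D \<epsilon> p q D)"
    if "\<not> 7 dvd p * q * D \<and> (p mod 7 = 2 \<or> p mod 7 = 3 \<or> p mod 7 = 6)"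
    using twin_residues[of 7 p q D] twin_trace_7_supersingular that assms(5,6)
    by (intro good_supersingular_at_E_D) auto
qed

end
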